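(* For complex numbers $\alpha_1,\dots,\alpha_r$ and $\theta_i=t_i\frac{\partial}{\partial t_i}$, \[ \Bigl(\prod_{i<j}(\theta_i-\theta_j)\Bigr)e^{\sum_{i=1}^r\alpha_it_i}=e^{\sum_{i=1}^r\alpha_it_i}\prod_{i<j}(\alpha_it_i-\alpha_jt_j). \] *)

theory Defs
  imports "HOL-Analysis.Analysis"
begin

text \<open>Functions of r complex variables t_1,...,t_r are modelled as
  functions on points t :: nat \<Rightarrow> complex (only coordinates 1..r matter).\<close>

definition partial :: "nat \<Rightarrow> ((nat \<Rightarrow> complex) \<Rightarrow> complex) \<Rightarrow> (nat \<Rightarrow> complex) \<Rightarrow> complex" where
  "partial i f = (\<lambda>t. deriv (\<lambda>s. f (t(i := s))) (t i))"

definition theta :: "nat \<Rightarrow> ((nat \<Rightarrow> complex) \<Rightarrow> complex) \<Rightarrow> (nat \<Rightarrow> complex) \<Rightarrow> complex" where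
  "theta i f = (\<lambda>t. t i * partial i f t)"

definition theta_diff :: "nat \<Rightarrow> nat \<Rightarrow> ((nat \<Rightarrow> complex) \<Rightarrow> complex) \<Rightarrow> (nat \<Rightarrow> complex) \<Rightarrow> complex" where
  "theta_diff i j f = (\<lambda>t. theta i f t - theta j f t)"

definition pairs_list :: "nat \<Rightarrow> (nat \<times> nat) list" where
  "pairs_list r = [(i, j). i \<leftarrow> [1..<r+1], j \<leftarrow> [i+1..<r+1]]"

definition vdm_op :: "nat \<Rightarrow> ((nat \<Rightarrow> complex) \<Rightarrow> complex) \<Rightarrow> (nat \<Rightarrow> complex) \<Rightarrow> complex" where
  "vdm_op r f = foldr (\<lambda>(i, j) g. theta_diff i j g) (pairs_list r) f"

end

theory Submission
  imports Defs "HOL-Combinatorics.Transposition" "HOL-Computational_Algebra.Polynomial"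
begin

text \<open>Put x_i = \<alpha>_i t_i. The Euler operator \<theta>_i maps exp(x_i) T_m(x_i) to exp(x_i) T_(m+1)(x_i),
  where the T_m are the Touchard polynomials, monic of degree m. Expanding the operator
  \<Prod>_(i<j) (\<theta>_i - \<theta>_j) as a polynomial \<Sum> c_k \<theta>^k, the left-hand side is therefore exp(\<Sum> x_i)
  times the Vandermonde polynomial V(x) = \<Sum> c_k x^k with every power x_i^m replaced by T_m(x_i).
  This replacement leaves V unchanged. Expand each T_m into powers: the coefficient of x^f
  vanishes when f is not injective, because V is alternating; when f is injective, its total
  degree is at least r(r-1)/2 = deg V, so only the leading coefficients of the T_m contribute.\<close>

section \<open>Umbral evaluation of formal sums\<close>

type_synonym 'a formal_sum = "('a \<times> (nat \<Rightarrow> nat)) list"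

text \<open>A formal sum \<Sum> c z^k over exponent vectors k (only the coordinates in I matter) is
  evaluated with every power z_i^m replaced by a i m; taking a i m = z i ^ m gives ordinary
  evaluation.\<close>
definition umbral_eval :: "nat set \<Rightarrow> (nat \<Rightarrow> nat \<Rightarrow> 'a::comm_semiring_1) \<Rightarrow> 'a formal_sum \<Rightarrow> 'a" where
  "umbral_eval I a L = (\<Sum>(c, k)\<leftarrow>L. c * (\<Prod>i\<in>I. a i (k i)))"

definition mul_var :: "nat \<Rightarrow> 'a formal_sum \<Rightarrow> 'a formal_sum" where
  "mul_var j L = map (\<lambda>(c, k). (c, k(j := Suc (k j)))) L"

definition neg_terms :: "'a::uminus formal_sum \<Rightarrow> 'a formal_sum" where
  "neg_terms L = map (\<lambda>(c, k). (- c, k)) L"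

definition mul_var_diff :: "nat \<Rightarrow> nat \<Rightarrow> 'a::uminus formal_sum \<Rightarrow> 'a formal_sum" where
  "mul_var_diff i j L = mul_var i L @ neg_terms (mul_var j L)"

text \<open>The expansion of \<Prod>_((i,j) \<in> ps) (z_i - z_j), built in the same order as vdm_op.\<close>
definition diff_prod_terms :: "(nat \<times> nat) list \<Rightarrow> 'a::{one,uminus} formal_sum" where
  "diff_prod_terms ps = foldr (\<lambda>(i, j). mul_var_diff i j) ps [(1, \<lambda>_. 0)]"

lemma umbral_eval_Nil [simp]: "umbral_eval I a [] = 0"
  by (simp add: umbral_eval_def)

lemma umbral_eval_Cons [simp]:
  "umbral_eval I a ((c, k) # L) = c * (\<Prod>i\<in>I. a i (k i)) + umbral_eval I a L"
  by (simp add: umbral_eval_def)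

lemma umbral_eval_append [simp]: "umbral_eval I a (L @ M) = umbral_eval I a L + umbral_eval I a M"
  by (simp add: umbral_eval_def)

lemma umbral_eval_neg_terms [simp]:
  "umbral_eval I a (neg_terms L) = - umbral_eval I (a :: _ \<Rightarrow> _ \<Rightarrow> 'a::comm_ring_1) L"
  by (induction L) (auto simp: neg_terms_def)

lemma umbral_eval_mul_var:
  "umbral_eval I a (mul_var j L) = umbral_eval I (a(j := \<lambda>m. a j (Suc m))) L"
proof (induction L)
  case (Cons p L)
  obtain c k where "p = (c, k)" by fastforce
  moreover have "(\<Prod>i\<in>I. a i ((k(j := Suc (k j))) i)) = (\<Prod>i\<in>I. (a(j := \<lambda>m. a j (Suc m))) i (k i))"
    by (intro prod.cong) auto
  ultimately show ?case using Cons by (simp add: mul_var_def)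
qed (simp add: mul_var_def)

lemma umbral_eval_mult:
  "umbral_eval I (\<lambda>i m. x i * a i m) L = (\<Prod>i\<in>I. x i) * umbral_eval I a L"
  by (induction L) (auto simp: prod.distrib algebra_simps)

lemma umbral_eval_cong_monomials:
  assumes "\<And>c k. (c, k) \<in> set L \<Longrightarrow> (\<Prod>i\<in>I. a i (k i)) = (\<Prod>i\<in>I. b i (k i))"
  shows "umbral_eval I a L = umbral_eval I b L"
  using assms by (induction L) force+

lemma umbral_eval_cong:
  "(\<And>i. i \<in> I \<Longrightarrow> a i = b i) \<Longrightarrow> umbral_eval I a L = umbral_eval I b L"
  by (rule umbral_eval_cong_monomials) (auto intro: prod.cong)

lemma umbral_eval_scale:
  assumes "finite I" "j \<in> I"
  shows "umbral_eval I (a(j := \<lambda>m. x * a j m)) L = x * umbral_eval I a L"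
proof (induction L)
  case (Cons p L)
  obtain c k where p: "p = (c, k)" by fastforce
  have "(\<Prod>i\<in>I. (a(j := \<lambda>m. x * a j m)) i (k i)) = x * a j (k j) * (\<Prod>i\<in>I-{j}. a i (k i))"
    by (subst prod.remove[OF assms]) (auto intro!: prod.cong)
  also have "\<dots> = x * (\<Prod>i\<in>I. a i (k i))"
    using prod.remove[OF assms, of "\<lambda>i. a i (k i)"] by (simp add: mult.assoc)
  finally show ?case using Cons p by (simp add: algebra_simps)
qed simp

lemma umbral_eval_powers_mul_var:
  assumes "finite I" "j \<in> I"
  shows "umbral_eval I (\<lambda>i m. z i ^ m) (mul_var j L) = z j * umbral_eval I (\<lambda>i m. z i ^ m) L"
  using umbral_eval_scale[OF assms, of "\<lambda>i m. z i ^ m" "z j"]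
  by (simp add: umbral_eval_mul_var fun_upd_def cong: if_cong)

lemma umbral_eval_powers_diff_prod_terms:
  fixes z :: "nat \<Rightarrow> 'a::comm_ring_1"
  assumes "finite I" "set ps \<subseteq> I \<times> I"
  shows "umbral_eval I (\<lambda>i m. z i ^ m) (diff_prod_terms ps) = (\<Prod>(i, j)\<leftarrow>ps. z i - z j)"
  using assms(2)
proof (induction ps)
  case (Cons p ps)
  then obtain i j where "p = (i, j)" "i \<in> I" "j \<in> I" by auto
  with Cons show ?case
    by (simp add: diff_prod_terms_def mul_var_diff_def umbral_eval_powers_mul_var[OF assms(1)]
        algebra_simps)
qed (simp add: diff_prod_terms_def)

lemma sum_fun_upd_Suc:
  assumes "finite I" "j \<in> I"
  shows "(\<Sum>i\<in>I. (k(j := Suc (k j))) i) = Suc (\<Sum>i\<in>I. k i)"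
  using sum.remove[OF assms, of "k(j := Suc (k j))"] sum.remove[OF assms, of k]
  by (simp add: sum.cong[of "I - {j}" _ "k(j := Suc (k j))" k])

lemma diff_prod_terms_homogeneous:
  assumes "finite I" "set ps \<subseteq> I \<times> I" "(c, k) \<in> set (diff_prod_terms ps)"
  shows "(\<Sum>i\<in>I. k i) = length ps"
  using assms(2,3)
proof (induction ps arbitrary: c k)
  case (Cons p ps)
  then obtain i j where "p = (i, j)" "i \<in> I" "j \<in> I" by auto
  with Cons show ?case
    by (auto simp: diff_prod_terms_def mul_var_diff_def mul_var_def neg_terms_def
        sum_fun_upd_Suc[OF assms(1)] simp del: fun_upd_apply)
qed (simp add: diff_prod_terms_def)

lemma umbral_eval_insert:
  assumes "finite J" "j \<notin> J" "\<forall>(c, k)\<in>set L. k j \<le> D"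
  shows "umbral_eval (insert j J) a L = (\<Sum>m\<le>D. a j m * umbral_eval J a (filter (\<lambda>(c, k). k j = m) L))"
  using assms(3)
proof (induction L)
  case (Cons p L)
  obtain c k where p: "p = (c, k)" by fastforce
  have "k j \<le> D" using Cons.prems p by auto
  have "(\<Sum>m\<le>D. a j m * umbral_eval J a (filter (\<lambda>(c, k). k j = m) (p # L)))
      = (\<Sum>m\<le>D. (if m = k j then a j m * (c * (\<Prod>i\<in>J. a i (k i))) else 0)
                 + a j m * umbral_eval J a (filter (\<lambda>(c, k). k j = m) L))"
    by (intro sum.cong) (auto simp: p algebra_simps)
  also have "\<dots> = a j (k j) * (c * (\<Prod>i\<in>J. a i (k i)))
                  + (\<Sum>m\<le>D. a j m * umbral_eval J a (filter (\<lambda>(c, k). k j = m) L))"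
    using \<open>k j \<le> D\<close> by (simp add: sum.distrib)
  moreover have "umbral_eval (insert j J) a L
      = (\<Sum>m\<le>D. a j m * umbral_eval J a (filter (\<lambda>(c, k). k j = m) L))"
    by (rule Cons.IH) (use Cons.prems in auto)
  ultimately show ?case using p assms(1,2) by (simp add: algebra_simps)
qed simp

lemma umbral_eval_eq_if_powers_eq:
  fixes L M :: "'a::{idom,real_normed_div_algebra} formal_sum"
  assumes "finite I" "\<And>z. umbral_eval I (\<lambda>i m. z i ^ m) L = umbral_eval I (\<lambda>i m. z i ^ m) M"
  shows "umbral_eval I a L = umbral_eval I a M"
  using assms
proof (induction I arbitrary: L M rule: finite_induct)
  case empty
  show ?case by (rule trans[OF _ trans[OF empty.prems]]) (simp_all add: umbral_eval_def)
next
  case (insert j J)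
  define D where "D = Max ((\<lambda>(c, k). k j) ` set (L @ M))"
  have bound_L: "\<forall>(c, k)\<in>set L. k j \<le> D" and bound_M: "\<forall>(c, k)\<in>set M. k j \<le> D"
    unfolding D_def by (auto intro!: Max_ge)
  let ?sel = "\<lambda>N m. filter (\<lambda>(c, k). k j = m) N"
  have "umbral_eval J (\<lambda>i m. w i ^ m) (?sel L m) = umbral_eval J (\<lambda>i m. w i ^ m) (?sel M m)"
    if "m \<le> D" for m w
  proof -
    have J_eval: "umbral_eval J (\<lambda>i m. (w(j := x)) i ^ m) N = umbral_eval J (\<lambda>i m. w i ^ m) N"
      for x N by (rule umbral_eval_cong) (use insert.hyps in auto)
    have poly_eq: "(\<Sum>m\<le>D. umbral_eval J (\<lambda>i m. w i ^ m) (?sel L m) * x ^ m)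
        = (\<Sum>m\<le>D. umbral_eval J (\<lambda>i m. w i ^ m) (?sel M m) * x ^ m)" for x
    proof -
      have "umbral_eval (insert j J) (\<lambda>i m. (w(j := x)) i ^ m) L
          = umbral_eval (insert j J) (\<lambda>i m. (w(j := x)) i ^ m) M"
        by (rule insert.prems)
      then show ?thesis
        by (simp only: umbral_eval_insert[OF insert.hyps(1,2) bound_L]
            umbral_eval_insert[OF insert.hyps(1,2) bound_M] J_eval fun_upd_same mult.commute)
    qed
    from polyfun_eq_coeffs[THEN iffD1, OF allI, OF poly_eq] that show ?thesis
      by simp
  qed
  then have "umbral_eval J a (?sel L m) = umbral_eval J a (?sel M m)" if "m \<le> D" for m
    using insert.IH that by blast
  then show ?case
    by (simp add: umbral_eval_insert[OF insert.hyps(1,2) bound_L]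
        umbral_eval_insert[OF insert.hyps(1,2) bound_M])
qed

section \<open>The Vandermonde polynomial\<close>

definition vandermonde :: "nat \<Rightarrow> (nat \<Rightarrow> 'a::comm_ring_1) \<Rightarrow> 'a" where
  "vandermonde r z = (\<Prod>(i, j) \<in> {(i, j). 1 \<le> i \<and> i < j \<and> j \<le> r}. z i - z j)"

lemma set_pairs_list: "set (pairs_list r) = {(i, j). 1 \<le> i \<and> i < j \<and> j \<le> r}"
  by (force simp: pairs_list_def simp del: upt_Suc)

lemma distinct_pairs_list: "distinct (pairs_list r)"
proof -
  have "distinct (concat (map (\<lambda>i. map (Pair i) (f i)) xs))"
    if "distinct xs" "\<And>i. distinct (f i)" for xs :: "nat list" and f :: "nat \<Rightarrow> nat list"
    using that by (induction xs) (auto simp: distinct_map inj_on_def)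
  then show ?thesis by (simp add: pairs_list_def del: upt_Suc)
qed

lemma length_pairs_list: "length (pairs_list r) = (\<Sum>i<r. i)"
proof -
  have "length (pairs_list r) = (\<Sum>i = 1..r. r - i)"
    by (simp add: pairs_list_def length_concat comp_def sum_list_distinct_conv_sum_set
        atLeastLessThanSuc_atLeastAtMost del: upt_Suc)
  also have "\<dots> = (\<Sum>i<r. i)"
    by (rule sum.reindex_bij_witness[where i="\<lambda>i. r - i" and j="\<lambda>i. r - i"]) auto
  finally show ?thesis .
qed

lemma prod_list_pairs_list: "(\<Prod>(i, j)\<leftarrow>pairs_list r. z i - z j) = vandermonde r z"
  unfolding vandermonde_def set_pairs_list[symmetric]
  by (rule prod.distinct_set_conv_list[OF distinct_pairs_list, symmetric])

lemma vandermonde_transpose_Suc: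
  assumes "1 \<le> a" "Suc a \<le> r"
  shows "vandermonde r (z \<circ> Transposition.transpose a (Suc a)) = - vandermonde r z"
proof -
  let ?\<tau> = "Transposition.transpose a (Suc a)"
  define R where "R = {(i, j). 1 \<le> i \<and> i < j \<and> j \<le> r} - {(a, Suc a)}"
  have pairs: "{(i, j). 1 \<le> i \<and> i < j \<and> j \<le> r} = insert (a, Suc a) R" "(a, Suc a) \<notin> R" "finite R"
    using assms by (auto simp: R_def intro: finite_subset[of _ "{..r} \<times> {..r}"])
  have "(\<Prod>(i, j)\<in>R. z (?\<tau> i) - z (?\<tau> j)) = (\<Prod>(i, j)\<in>R. z i - z j)"
    by (rule prod.reindex_bij_witness[where i="map_prod ?\<tau> ?\<tau>" and j="map_prod ?\<tau> ?\<tau>"])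
      (use assms in \<open>auto simp: R_def Transposition.transpose_def split: if_splits\<close>)
  then show ?thesis
    using pairs by (simp add: vandermonde_def algebra_simps)
qed

lemma vandermonde_transpose_less:
  assumes "1 \<le> a" "a < b" "b \<le> r"
  shows "vandermonde r (z \<circ> Transposition.transpose a b) = - vandermonde r z"
  using assms(2,3)
proof (induction b arbitrary: z)
  case (Suc b)
  show ?case
  proof (cases "b = a")
    case True
    then show ?thesis using vandermonde_transpose_Suc assms(1) Suc.prems by blast
  next
    case False
    let ?\<tau> = "Transposition.transpose (Suc b) b"
    have conj: "Transposition.transpose a (Suc b) = ?\<tau> \<circ> Transposition.transpose b a \<circ> ?\<tau>"
      using Suc.prems False by (auto simp: fun_eq_iff Transposition.transpose_def)
    have adj: "vandermonde r (w \<circ> ?\<tau>) = - vandermonde r w" for w :: "nat \<Rightarrow> 'a"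
      using vandermonde_transpose_Suc[of b r w] assms(1) Suc.prems False
      by (simp add: transpose_commute)
    have "vandermonde r (z \<circ> Transposition.transpose a (Suc b))
        = vandermonde r (((z \<circ> ?\<tau>) \<circ> Transposition.transpose a b) \<circ> ?\<tau>)"
      by (simp add: conj transpose_commute comp_assoc)
    also have "\<dots> = - vandermonde r ((z \<circ> ?\<tau>) \<circ> Transposition.transpose a b)"
      by (rule adj)
    also have "\<dots> = vandermonde r (z \<circ> ?\<tau>)"
      using Suc.IH[of "z \<circ> ?\<tau>"] Suc.prems False by (simp add: comp_def)
    also have "\<dots> = - vandermonde r z"
      by (rule adj)
    finally show ?thesis .
  qed
qed simp

lemma vandermonde_transpose:
  assumes "i \<in> {1..r}" "j \<in> {1..r}" "i \<noteq> j"
  shows "vandermonde r (z \<circ> Transposition.transpose i j) = - vandermonde r z"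
  using assms vandermonde_transpose_less[of i j r z] vandermonde_transpose_less[of j i r z]
  by (cases "i < j") (auto simp: transpose_commute)

lemma umbral_eval_transpose:
  assumes "i \<in> I" "j \<in> I"
  shows "umbral_eval I (a \<circ> Transposition.transpose i j) L
       = umbral_eval I a (map (\<lambda>(c, k). (c, k \<circ> Transposition.transpose i j)) L)"
proof (induction L)
  case (Cons p L)
  obtain c k where "p = (c, k)" by fastforce
  moreover have "(\<Prod>l\<in>I. a (Transposition.transpose i j l) (k l))
      = (\<Prod>l\<in>I. a l (k (Transposition.transpose i j l)))"
    by (rule prod.reindex_bij_witness[where i="Transposition.transpose i j" and j="Transposition.transpose i j"])
      (use assms in \<open>auto simp: Transposition.transpose_def\<close>)
  ultimately show ?case using Cons by simp
qed simp

text \<open>Transposing i and j negates the Vandermonde polynomial, hence (by the identity theorem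
  umbral_eval_eq_if_powers_eq) every umbral evaluation of its expansion; but it fixes a when
  a i = a j.\<close>
lemma umbral_eval_vandermonde_terms_eq_0:
  fixes a :: "nat \<Rightarrow> nat \<Rightarrow> 'a::{idom,real_normed_div_algebra}"
  assumes "i \<in> {1..r}" "j \<in> {1..r}" "i \<noteq> j" "a i = a j"
  shows "umbral_eval {1..r} a (diff_prod_terms (pairs_list r)) = 0"
proof -
  let ?I = "{1..r}" and ?L = "diff_prod_terms (pairs_list r)" and ?\<tau> = "Transposition.transpose i j"
  let ?M = "map (\<lambda>(c, k). (c, k \<circ> ?\<tau>)) ?L"
  have powers: "umbral_eval ?I (\<lambda>l m. z l ^ m) ?L = vandermonde r z" for z :: "nat \<Rightarrow> 'a"
    using umbral_eval_powers_diff_prod_terms[of ?I "pairs_list r" z]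
    by (simp add: set_pairs_list prod_list_pairs_list subset_iff)
  have "umbral_eval ?I (\<lambda>l m. z l ^ m) ?M = umbral_eval ?I (\<lambda>l m. z l ^ m) (neg_terms ?L)"
    for z :: "nat \<Rightarrow> 'a"
  proof -
    have "umbral_eval ?I (\<lambda>l m. z l ^ m) ?M = umbral_eval ?I (\<lambda>l m. (z \<circ> ?\<tau>) l ^ m) ?L"
      using umbral_eval_transpose[OF assms(1,2), of "\<lambda>l m. z l ^ m" ?L] by (simp add: comp_def)
    also have "\<dots> = - vandermonde r z"
      by (simp only: powers vandermonde_transpose[OF assms(1-3)])
    finally show ?thesis by (simp only: powers umbral_eval_neg_terms)
  qed
  then have "umbral_eval ?I a ?M = - umbral_eval ?I a ?L"
    using umbral_eval_eq_if_powers_eq[of ?I ?M "neg_terms ?L" a] by simp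
  moreover have "a \<circ> ?\<tau> = a"
    using assms(4) by (auto simp: fun_eq_iff Transposition.transpose_def)
  then have "umbral_eval ?I a ?L = umbral_eval ?I a ?M"
    using umbral_eval_transpose[OF assms(1,2), of a ?L] by simp
  ultimately show ?thesis by simp
qed

section \<open>Replacing powers by monic polynomials\<close>

lemma sum_lessThan_card_le_sum:
  fixes S :: "nat set"
  assumes "finite S"
  shows "(\<Sum>i<card S. i) \<le> \<Sum>S"
  using assms
proof (induction "card S" arbitrary: S)
  case (Suc n)
  define M where "M = Max S"
  have "S \<noteq> {}" using Suc.hyps by auto
  then have "M \<in> S" using Suc.prems by (simp add: M_def)
  have "S \<subseteq> {..M}"
    using Suc.prems by (auto simp: M_def)
  then have "card S \<le> Suc M"
    using card_mono[OF finite_atMost] by fastforce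
  moreover have "card (S - {M}) = n"
    using Suc.hyps(2) \<open>M \<in> S\<close> Suc.prems by simp
  then have "(\<Sum>i<n. i) \<le> \<Sum>(S - {M})"
    using Suc.hyps(1)[of "S - {M}"] Suc.prems by simp
  moreover have "\<Sum>S = M + \<Sum>(S - {M})"
    using sum.remove[OF Suc.prems \<open>M \<in> S\<close>, of id] by simp
  ultimately show ?case using Suc.hyps(2)[symmetric] by simp
qed simp

lemma sum_lessThan_card_le_sum_inj:
  fixes f :: "'a \<Rightarrow> nat"
  assumes "finite I" "inj_on f I"
  shows "(\<Sum>i<card I. i) \<le> (\<Sum>i\<in>I. f i)"
  using sum_lessThan_card_le_sum[of "f ` I"] assms
  by (simp add: card_image sum.reindex)

lemma umbral_eval_poly_expand:
  fixes p :: "nat \<Rightarrow> 'a::comm_ring_1 poly"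
  assumes "finite I" "\<And>m. degree (p m) \<le> m" "\<forall>(c, k)\<in>set L. \<forall>i\<in>I. k i \<le> N"
  shows "umbral_eval I (\<lambda>i m. poly (p m) (u i)) L
       = (\<Sum>f\<in>I \<rightarrow>\<^sub>E {..N}. (\<Prod>i\<in>I. u i ^ f i) * umbral_eval I (\<lambda>i m. coeff (p m) (f i)) L)"
  using assms(3)
proof (induction L)
  case (Cons q L)
  obtain c k where q: "q = (c, k)" by fastforce
  have "poly (p (k i)) (u i) = (\<Sum>l\<le>N. coeff (p (k i)) l * u i ^ l)" if "i \<in> I" for i
    using Cons.prems that q assms(2)[of "k i"]
    by (auto simp: poly_altdef intro!: sum.mono_neutral_left) (metis le_degree mult_not_zero)
  then have "c * (\<Prod>i\<in>I. poly (p (k i)) (u i))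
      = c * (\<Sum>f\<in>I \<rightarrow>\<^sub>E {..N}. \<Prod>i\<in>I. coeff (p (k i)) (f i) * u i ^ f i)"
    using assms(1) by (simp add: prod_sum_PiE cong: prod.cong)
  also have "\<dots> = (\<Sum>f\<in>I \<rightarrow>\<^sub>E {..N}. (\<Prod>i\<in>I. u i ^ f i) * (c * (\<Prod>i\<in>I. coeff (p (k i)) (f i))))"
    by (simp add: sum_distrib_left prod.distrib algebra_simps)
  finally show ?case using Cons q by (simp add: sum.distrib algebra_simps)
qed simp

lemma umbral_eval_coeff_monic:
  fixes p :: "nat \<Rightarrow> 'a::comm_ring_1 poly"
  assumes "finite I"
    and hom: "\<And>c k. (c, k) \<in> set L \<Longrightarrow> (\<Sum>i\<in>I. k i) = N"
    and inj_bound: "\<And>f. inj_on f I \<Longrightarrow> N \<le> (\<Sum>i\<in>I. f i)"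
    and alt: "\<And>a i j. i \<in> I \<Longrightarrow> j \<in> I \<Longrightarrow> i \<noteq> j \<Longrightarrow> a i = a j \<Longrightarrow> umbral_eval I a L = 0"
    and deg: "\<And>m. degree (p m) \<le> m" and lead: "\<And>m. coeff (p m) m = 1"
  shows "umbral_eval I (\<lambda>i m. coeff (p m) (f i)) L = umbral_eval I (\<lambda>i m. coeff (monom 1 m) (f i)) L"
proof (cases "inj_on f I")
  case True
  show ?thesis
  proof (rule umbral_eval_cong_monomials)
    fix c k assume ck: "(c, k) \<in> set L"
    show "(\<Prod>i\<in>I. coeff (p (k i)) (f i)) = (\<Prod>i\<in>I. coeff (monom 1 (k i)) (f i))"
    proof (cases "\<forall>i\<in>I. f i \<le> k i")
      case True
      have "\<forall>i\<in>I. f i = k i"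
      proof (rule ccontr)
        assume "\<not> (\<forall>i\<in>I. f i = k i)"
        with True obtain i where "i \<in> I" "f i < k i" by (meson le_neq_implies_less)
        with True have "(\<Sum>i\<in>I. f i) < (\<Sum>i\<in>I. k i)"
          using sum_strict_mono_ex1[OF \<open>finite I\<close>] by blast
        with hom[OF ck] inj_bound[OF \<open>inj_on f I\<close>] show False by simp
      qed
      then show ?thesis by (simp add: lead)
    next
      case False
      then obtain i where "i \<in> I" "k i < f i" by (auto simp: not_le)
      moreover have "coeff (p (k i)) (f i) = 0"
        using \<open>k i < f i\<close> deg[of "k i"] by (intro coeff_eq_0) simp
      ultimately show ?thesis
        using \<open>finite I\<close> by (metis (no_types, lifting) coeff_monom less_irrefl prod_zero)
    qed
  qed
next
  case False
  then obtain i j where "i \<in> I" "j \<in> I" "i \<noteq> j" "f i = f j" by (auto simp: inj_on_def)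
  then show ?thesis by (simp add: alt)
qed

lemma umbral_eval_monic_eq_powers:
  fixes p :: "nat \<Rightarrow> 'a::comm_ring_1 poly"
  assumes "finite I"
    and hom: "\<And>c k. (c, k) \<in> set L \<Longrightarrow> (\<Sum>i\<in>I. k i) = N"
    and inj_bound: "\<And>f. inj_on f I \<Longrightarrow> N \<le> (\<Sum>i\<in>I. f i)"
    and alt: "\<And>a i j. i \<in> I \<Longrightarrow> j \<in> I \<Longrightarrow> i \<noteq> j \<Longrightarrow> a i = a j \<Longrightarrow> umbral_eval I a L = 0"
    and deg: "\<And>m. degree (p m) \<le> m" and lead: "\<And>m. coeff (p m) m = 1"
  shows "umbral_eval I (\<lambda>i m. poly (p m) (u i)) L = umbral_eval I (\<lambda>i m. u i ^ m) L"
proof -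
  have bound: "\<forall>(c, k)\<in>set L. \<forall>i\<in>I. k i \<le> N"
    using member_le_sum[of _ I] hom \<open>finite I\<close> by fastforce
  have coeffs: "umbral_eval I (\<lambda>i m. coeff (p m) (f i)) L = umbral_eval I (\<lambda>i m. coeff (monom 1 m) (f i)) L"
    for f by (rule umbral_eval_coeff_monic[OF assms])
  have "umbral_eval I (\<lambda>i m. u i ^ m) L = umbral_eval I (\<lambda>i m. poly (monom 1 m) (u i)) L"
    by (simp add: poly_monom)
  then show ?thesis
    using umbral_eval_poly_expand[where L=L and N=N and p=p, OF \<open>finite I\<close> deg bound, of u]
      umbral_eval_poly_expand[where L=L and N=N and p="\<lambda>m. monom 1 m", OF \<open>finite I\<close> _ bound, of u]
    by (simp add: coeffs degree_monom_le)
qed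

section \<open>Euler operators on exponentials\<close>

text \<open>Touchard polynomials: (x d/dx)^m exp x = T_m(x) exp x.\<close>
fun touchard :: "nat \<Rightarrow> 'a::idom poly" where
  "touchard 0 = 1"
| "touchard (Suc m) = pCons 0 (touchard m + pderiv (touchard m))"

lemma degree_touchard: "degree (touchard m :: 'a::idom poly) \<le> m"
  and coeff_touchard_self: "coeff (touchard m :: 'a poly) m = 1"
proof (induction m)
  case (Suc m)
  have "degree (pderiv (touchard m :: 'a poly)) \<le> m"
    using Suc by (intro degree_le) (auto simp: coeff_pderiv intro!: disjI2 coeff_eq_0)
  then have "degree (touchard m + pderiv (touchard m :: 'a poly)) \<le> m"
    using Suc by (intro degree_add_le) auto
  moreover have "coeff (touchard m + pderiv (touchard m :: 'a poly)) m = 1"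
    using Suc by (simp add: coeff_pderiv coeff_eq_0)
  ultimately show "degree (touchard (Suc m) :: 'a poly) \<le> Suc m"
    and "coeff (touchard (Suc m) :: 'a poly) (Suc m) = 1"
    by (auto intro: order.trans[OF degree_pCons_le])
qed simp_all

lemma has_field_derivative_exp_touchard:
  "((\<lambda>z. exp (a * z) * poly (touchard m) (a * z)) has_field_derivative
      a * exp (a * z) * poly (touchard m + pderiv (touchard m)) (a * z)) (at z)"
proof -
  have "((\<lambda>z. poly (touchard m) (a * z)) has_field_derivative poly (pderiv (touchard m)) (a * z) * a) (at z)"
    by (rule DERIV_chain2[OF poly_DERIV]) (auto intro!: derivative_eq_intros)
  then show ?thesis
    by (auto intro!: derivative_eq_intros simp: algebra_simps)
qed

lemma umbral_eval_has_field_derivative: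
  assumes "finite I" "j \<in> I" "\<And>m. (h j m has_field_derivative h' m x) (at x)"
  shows "((\<lambda>y. umbral_eval I (\<lambda>i m. h i m ((t(j := y)) i)) L) has_field_derivative
           umbral_eval I ((\<lambda>i m. h i m (t i))(j := \<lambda>m. h' m x)) L) (at x)"
proof (induction L)
  case (Cons p L)
  obtain c k where p: "p = (c, k)" by fastforce
  define rest where "rest = (\<Prod>i\<in>I-{j}. h i (k i) (t i))"
  have "(\<Prod>i\<in>I. h i (k i) ((t(j := y)) i)) = h j (k j) y * rest" for y
    unfolding rest_def by (subst prod.remove[OF assms(1,2)]) (auto intro!: prod.cong)
  moreover have "(\<Prod>i\<in>I. ((\<lambda>i m. h i m (t i))(j := \<lambda>m. h' m x)) i (k i)) = h' (k j) x * rest"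
    unfolding rest_def by (subst prod.remove[OF assms(1,2)]) (auto intro!: prod.cong)
  moreover have "((\<lambda>y. c * (h j (k j) y * rest)) has_field_derivative c * (h' (k j) x * rest)) (at x)"
    by (intro DERIV_cmult DERIV_cmult_right assms(3))
  ultimately show ?case
    unfolding p umbral_eval_Cons by (intro DERIV_add Cons.IH) simp_all
qed simp

lemma theta_umbral_eval:
  assumes "finite I" "j \<in> I"
    and deriv: "\<And>m z. (h j m has_field_derivative h' m z) (at z)"
    and euler: "\<And>m z. z * h' m z = h j (Suc m) z"
  shows "theta j (\<lambda>s. umbral_eval I (\<lambda>i m. h i m (s i)) L)
       = (\<lambda>s. umbral_eval I (\<lambda>i m. h i m (s i)) (mul_var j L))"
proof
  fix t
  let ?a = "\<lambda>i m. h i m (t i)"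
  let ?b = "?a(j := \<lambda>m. h' m (t j))"
  have "theta j (\<lambda>s. umbral_eval I (\<lambda>i m. h i m (s i)) L) t = t j * umbral_eval I ?b L"
    using DERIV_imp_deriv[OF umbral_eval_has_field_derivative[where h=h and h'=h' and t=t and L=L,
          OF assms(1,2) deriv]]
    by (simp add: theta_def partial_def)
  also have "\<dots> = umbral_eval I (?b(j := \<lambda>m. t j * ?b j m)) L"
    by (rule umbral_eval_scale[OF assms(1,2), symmetric])
  also have "?b(j := \<lambda>m. t j * ?b j m) = ?a(j := \<lambda>m. ?a j (Suc m))"
    by (simp add: euler)
  finally show "theta j (\<lambda>s. umbral_eval I (\<lambda>i m. h i m (s i)) L) t
      = umbral_eval I (\<lambda>i m. h i m (t i)) (mul_var j L)"
    by (simp add: umbral_eval_mul_var fun_upd_def)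
qed

lemma theta_prod_umbral_eval:
  assumes "finite I" "set ps \<subseteq> I \<times> I"
    and deriv: "\<And>i m z. i \<in> I \<Longrightarrow> (h i m has_field_derivative h' i m z) (at z)"
    and euler: "\<And>i m z. i \<in> I \<Longrightarrow> z * h' i m z = h i (Suc m) z"
  shows "foldr (\<lambda>(i, j) g. theta_diff i j g) ps (\<lambda>s. umbral_eval I (\<lambda>i m. h i m (s i)) [(1, \<lambda>_. 0)])
       = (\<lambda>s. umbral_eval I (\<lambda>i m. h i m (s i)) (diff_prod_terms ps))"
  using assms(2)
proof (induction ps)
  case (Cons p ps)
  then obtain i j where ij: "p = (i, j)" "i \<in> I" "j \<in> I" by auto
  have "theta l (\<lambda>s. umbral_eval I (\<lambda>i m. h i m (s i)) L)
      = (\<lambda>s. umbral_eval I (\<lambda>i m. h i m (s i)) (mul_var l L))" if "l \<in> I" for l L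
    using theta_umbral_eval[where h=h and h'="h' l", OF assms(1) that deriv[OF that] euler[OF that]] .
  with Cons ij show ?case
    by (simp add: theta_diff_def diff_prod_terms_def mul_var_diff_def)
qed (simp add: diff_prod_terms_def)

lemma umbral_eval_touchard_vandermonde_terms:
  fixes u :: "nat \<Rightarrow> complex"
  shows "umbral_eval {1..r} (\<lambda>i m. poly (touchard m) (u i)) (diff_prod_terms (pairs_list r))
       = vandermonde r u"
proof -
  let ?I = "{1..r}" and ?L = "diff_prod_terms (pairs_list r) :: complex formal_sum"
  have pairs: "set (pairs_list r) \<subseteq> ?I \<times> ?I"
    by (auto simp: set_pairs_list)
  have "umbral_eval ?I (\<lambda>i m. poly (touchard m) (u i)) ?L = umbral_eval ?I (\<lambda>i m. u i ^ m) ?L"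
  proof (rule umbral_eval_monic_eq_powers[where N="length (pairs_list r)"])
    fix c k assume "(c, k) \<in> set ?L"
    then show "(\<Sum>i\<in>?I. k i) = length (pairs_list r)"
      by (rule diff_prod_terms_homogeneous[OF _ pairs, rotated]) simp
  next
    fix f :: "nat \<Rightarrow> nat" assume "inj_on f ?I"
    then show "length (pairs_list r) \<le> (\<Sum>i\<in>?I. f i)"
      using sum_lessThan_card_le_sum_inj[of ?I f] by (simp add: length_pairs_list)
  next
    fix a :: "nat \<Rightarrow> nat \<Rightarrow> complex" and i j
    assume "i \<in> ?I" "j \<in> ?I" "i \<noteq> j" "a i = a j"
    then show "umbral_eval ?I a ?L = 0"
      by (rule umbral_eval_vandermonde_terms_eq_0)
  qed (simp_all add: degree_touchard coeff_touchard_self)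
  also have "\<dots> = vandermonde r u"
    using umbral_eval_powers_diff_prod_terms[OF _ pairs] by (simp add: prod_list_pairs_list)
  finally show ?thesis .
qed

lemma vdm_op_exp:
  fixes \<alpha> :: "nat \<Rightarrow> complex"
  shows "vdm_op r (\<lambda>s. exp (\<Sum>i = 1..r. \<alpha> i * s i))
       = (\<lambda>s. umbral_eval {1..r} (\<lambda>i m. exp (\<alpha> i * s i) * poly (touchard m) (\<alpha> i * s i))
                (diff_prod_terms (pairs_list r)))"
proof -
  define h where "h i m z = exp (\<alpha> i * z) * poly (touchard m) (\<alpha> i * z)" for i m z
  define h' where "h' i m z = \<alpha> i * exp (\<alpha> i * z) * poly (touchard m + pderiv (touchard m)) (\<alpha> i * z)"
    for i m z
  have deriv: "(h i m has_field_derivative h' i m z) (at z)" for i m z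
    unfolding h_def h'_def by (rule has_field_derivative_exp_touchard)
  have euler: "z * h' i m z = h i (Suc m) z" for i m z
    by (simp add: h_def h'_def algebra_simps)
  have "exp (\<Sum>i = 1..r. \<alpha> i * s i) = umbral_eval {1..r} (\<lambda>i m. h i m (s i)) [(1, \<lambda>_. 0)]" for s
    by (simp add: h_def exp_sum)
  moreover have "foldr (\<lambda>(i, j) g. theta_diff i j g) (pairs_list r)
        (\<lambda>s. umbral_eval {1..r} (\<lambda>i m. h i m (s i)) [(1, \<lambda>_. 0)])
      = (\<lambda>s. umbral_eval {1..r} (\<lambda>i m. h i m (s i)) (diff_prod_terms (pairs_list r)))"
    by (rule theta_prod_umbral_eval) (use deriv euler in \<open>auto simp: set_pairs_list\<close>)
  ultimately show ?thesis
    unfolding vdm_op_def h_def by simp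
qed

theorem mainTheorem14:
  fixes r :: nat and \<alpha> :: "nat \<Rightarrow> complex" and t :: "nat \<Rightarrow> complex"
  shows "vdm_op r (\<lambda>s. exp (\<Sum>i = 1..r. \<alpha> i * s i)) t
       = exp (\<Sum>i = 1..r. \<alpha> i * t i)
         * (\<Prod>(i, j) \<in> {(i, j). 1 \<le> i \<and> i < j \<and> j \<le> r}. \<alpha> i * t i - \<alpha> j * t j)"
proof -
  let ?T = "\<lambda>i m. poly (touchard m) (\<alpha> i * t i)"
  have "vdm_op r (\<lambda>s. exp (\<Sum>i = 1..r. \<alpha> i * s i)) t
      = umbral_eval {1..r} (\<lambda>i m. exp (\<alpha> i * t i) * ?T i m) (diff_prod_terms (pairs_list r))"
    unfolding vdm_op_exp ..
  also have "\<dots> = exp (\<Sum>i = 1..r. \<alpha> i * t i) * umbral_eval {1..r} ?T (diff_prod_terms (pairs_list r))"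
    by (simp add: umbral_eval_mult exp_sum)
  also have "umbral_eval {1..r} ?T (diff_prod_terms (pairs_list r)) = vandermonde r (\<lambda>i. \<alpha> i * t i)"
    by (rule umbral_eval_touchard_vandermonde_terms)
  finally show ?thesis by (simp add: vandermonde_def)
qed

end
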